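(* For every set of formulas $\Gamma$ and every formula $\alpha$: if $\Gamma\vdash_{L_1^1}\alpha$ then $\Gamma\vDash_{\mathcal{M}_1^1}\alpha$.
   Context: Formulas are built from a countable set of propositional variables using unary $\neg,\circ$ and binary $\land,\lor,\to$; $\circ^0\alpha=\alpha$, $\circ^{m+1}\alpha=\circ(\circ^m\alpha)$. mbC is the Hilbert calculus with the axiom schemas of a standard axiomatization of positive classical propositional logic in $\land,\lor,\to$, plus (TND) $\alpha\lor\neg\alpha$ and (bc1) $\circ\alpha\to(\alpha\to(\neg\alpha\to\beta))$, with modus ponens as only rule; mbCciw is mbC plus (ciw) $\circ\alpha\lor(\alpha\land\neg\alpha)$; $L_1^0$ is mbCciw plus $\circ\circ\circ\alpha$; $L_1^1$ is $L_1^0$ plus (cf) $\neg\neg\alpha\to\alpha$ and (ce) $\alpha\to\neg\neg\alpha$. $\Gamma\vdash_L\alpha$ means derivability in $L$. Semantics: with Boolean operations $\land,\lor,\to,\sim$ on $\{0,1\}$, let $\mathbb{B}_1^0=\{x\in\{0,1\}^3: x_1\lor x_2=1,\ x_3\lor\sim(x_1\land x_2)=1\}$. The multialgebra $\mathcal{B}_1^1$ on $\mathbb{B}_1^0$ has $x\# y=\{z\in\mathbb{B}_1^0: z_1=x_1\# y_1\}$ for $\#\in\{\land,\lor,\to\}$, $\neg x=\{z\in\mathbb{B}_1^0: z_1=x_2 \text{ and } z_2=x_1\}$, $\circ x=\{(\sim(x_1\land x_2),x_3,x_3\land\sim(x_1\land x_2))\}$. $D_1^0=\{x:x_1=1\}$,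 $\mathcal{M}_1^1=(\mathcal{B}_1^1,D_1^0)$. Valuations over $\mathcal{M}_1^1$ are maps $h$ from formulas to $\mathbb{B}_1^0$ with $h(\alpha\#\beta)\in h(\alpha)\#h(\beta)$, $h(\neg\alpha)\in\neg h(\alpha)$, $h(\circ\alpha)\in\circ h(\alpha)$; $\Gamma\vDash_{\mathcal{M}_1^1}\alpha$ iff every valuation $h$ with $h[\Gamma]\subseteq D_1^0$ has $h(\alpha)\in D_1^0$. *)

theory Defs
  imports Main
begin

datatype fm =
    Var nat
  | Neg fm
  | Circ fm
  | And fm fm
  | Or fm fm
  | Imp fm fm

fun circ_pow :: "nat \<Rightarrow> fm \<Rightarrow> fm" where
  "circ_pow 0 a = a"
| "circ_pow (Suc m) a = Circ (circ_pow m a)"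

inductive axiom_L11 :: "fm \<Rightarrow> bool" where
  Ax1: "axiom_L11 (Imp a (Imp b a))"
| Ax2: "axiom_L11 (Imp (Imp a b) (Imp (Imp a (Imp b c)) (Imp a c)))"
| Ax3: "axiom_L11 (Imp a (Imp b (And a b)))"
| Ax4: "axiom_L11 (Imp (And a b) a)"
| Ax5: "axiom_L11 (Imp (And a b) b)"
| Ax6: "axiom_L11 (Imp a (Or a b))"
| Ax7: "axiom_L11 (Imp b (Or a b))"
| Ax8: "axiom_L11 (Imp (Imp a c) (Imp (Imp b c) (Imp (Or a b) c)))"
| Ax9: "axiom_L11 (Or a (Imp a b))"
| TND: "axiom_L11 (Or a (Neg a))"
| bc1: "axiom_L11 (Imp (Circ a) (Imp a (Imp (Neg a) b)))"
| ciw: "axiom_L11 (Or (Circ a) (And a (Neg a)))"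
| circ3: "axiom_L11 (circ_pow 3 a)"
| cf: "axiom_L11 (Imp (Neg (Neg a)) a)"
| ce: "axiom_L11 (Imp a (Neg (Neg a)))"

inductive derivable_L11 :: "fm set \<Rightarrow> fm \<Rightarrow> bool" where
  prem: "a \<in> \<Gamma> \<Longrightarrow> derivable_L11 \<Gamma> a"
| ax: "axiom_L11 a \<Longrightarrow> derivable_L11 \<Gamma> a"
| MP: "derivable_L11 \<Gamma> a \<Longrightarrow> derivable_L11 \<Gamma> (Imp a b) \<Longrightarrow> derivable_L11 \<Gamma> b"

type_synonym snap = "bool \<times> bool \<times> bool"

definition B10 :: "snap set" where
  "B10 = {(x1, x2, x3). (x1 \<or> x2) \<and> (x3 \<or> \<not> (x1 \<and> x2))}"

definition m_and :: "snap \<Rightarrow> snap \<Rightarrow> snap set" where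
  "m_and x y = {z \<in> B10. fst z = (fst x \<and> fst y)}"
definition m_or :: "snap \<Rightarrow> snap \<Rightarrow> snap set" where
  "m_or x y = {z \<in> B10. fst z = (fst x \<or> fst y)}"
definition m_imp :: "snap \<Rightarrow> snap \<Rightarrow> snap set" where
  "m_imp x y = {z \<in> B10. fst z = (fst x \<longrightarrow> fst y)}"
definition m_neg :: "snap \<Rightarrow> snap set" where
  "m_neg x = {z \<in> B10. fst z = fst (snd x) \<and> fst (snd z) = fst x}"
definition m_circ :: "snap \<Rightarrow> snap set" where
  "m_circ x = (case x of (x1, x2, x3) \<Rightarrow> {(\<not> (x1 \<and> x2), x3, x3 \<and> \<not> (x1 \<and> x2))})"

definition D10 :: "snap set" where
  "D10 = {x. fst x}"

definition valuation_M11 :: "(fm \<Rightarrow> snap) \<Rightarrow> bool" where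
  "valuation_M11 h \<longleftrightarrow>
     (\<forall>a. h a \<in> B10) \<and>
     (\<forall>a b. h (And a b) \<in> m_and (h a) (h b)) \<and>
     (\<forall>a b. h (Or a b) \<in> m_or (h a) (h b)) \<and>
     (\<forall>a b. h (Imp a b) \<in> m_imp (h a) (h b)) \<and>
     (\<forall>a. h (Neg a) \<in> m_neg (h a)) \<and>
     (\<forall>a. h (Circ a) \<in> m_circ (h a))"

definition consequence_M11 :: "fm set \<Rightarrow> fm \<Rightarrow> bool" where
  "consequence_M11 \<Gamma> a \<longleftrightarrow>
     (\<forall>h. valuation_M11 h \<longrightarrow> h ` \<Gamma> \<subseteq> D10 \<longrightarrow> h a \<in> D10)"

end

theory Submission
  imports Defs
begin

text \<open>Designation is the first coordinate, and on it the multioperations for \<open>\<and>, \<or>, \<rightarrow>\<close>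
act classically, so the positive axioms are valid and modus ponens preserves designation.
A valuation designates \<open>\<circ>\<alpha>\<close> exactly when it does not designate both \<open>\<alpha>\<close> and \<open>\<not>\<alpha>\<close>,
which validates bc1 and ciw; and the third coordinate of \<open>\<circ>x\<close> is the conjunction of its
first two, so \<open>\<circ>\<circ>\<alpha>\<close> is never contradictory and \<open>\<circ>\<circ>\<circ>\<alpha>\<close> is always designated.\<close>

context
  fixes h :: "fm \<Rightarrow> snap"
  assumes valuation: "valuation_M11 h"
begin

lemma valuation_fst_And: "fst (h (And a b)) \<longleftrightarrow> fst (h a) \<and> fst (h b)"
  using valuation by (auto simp: valuation_M11_def m_and_def)

lemma valuation_fst_Or: "fst (h (Or a b)) \<longleftrightarrow> fst (h a) \<or> fst (h b)"
  using valuation by (auto simp: valuation_M11_def m_or_def)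

lemma valuation_fst_Imp: "fst (h (Imp a b)) \<longleftrightarrow> (fst (h a) \<longrightarrow> fst (h b))"
  using valuation by (auto simp: valuation_M11_def m_imp_def)

lemma valuation_fst_Neg: "fst (h (Neg a)) = fst (snd (h a))"
  using valuation by (auto simp: valuation_M11_def m_neg_def)

lemma valuation_fst_snd_Neg: "fst (snd (h (Neg a))) = fst (h a)"
  using valuation by (auto simp: valuation_M11_def m_neg_def)

lemma valuation_Circ:
  "h (Circ a) = (case h a of (x1, x2, x3) \<Rightarrow> (\<not> (x1 \<and> x2), x3, x3 \<and> \<not> (x1 \<and> x2)))"
  using valuation by (auto simp: valuation_M11_def m_circ_def split: prod.splits)

lemma valuation_fst_or_Neg: "fst (h a) \<or> fst (h (Neg a))"
proof -
  have "h a \<in> B10"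
    using valuation by (simp add: valuation_M11_def)
  then show ?thesis
    by (cases "h a") (simp add: B10_def valuation_fst_Neg)
qed

lemma valuation_fst_Circ: "fst (h (Circ a)) \<longleftrightarrow> \<not> (fst (h a) \<and> fst (h (Neg a)))"
  by (simp add: valuation_Circ valuation_fst_Neg split: prod.splits)

lemma valuation_Circ_Circ_consistent:
  "\<not> (fst (h (Circ (Circ a))) \<and> fst (h (Neg (Circ (Circ a)))))"
  by (auto simp add: valuation_Circ valuation_fst_Neg split: prod.splits)

lemma axiom_L11_designated: "axiom_L11 a \<Longrightarrow> fst (h a)"
proof (induction rule: axiom_L11.induct)
  case (TND a)
  show ?case
    using valuation_fst_or_Neg[of a] by (simp add: valuation_fst_Or)
next
  case (bc1 a b)
  show ?case
    by (simp add: valuation_fst_Imp valuation_fst_Circ)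
next
  case (ciw a)
  show ?case
    by (simp add: valuation_fst_Or valuation_fst_And valuation_fst_Circ)
next
  case (circ3 a)
  show ?case
    using valuation_Circ_Circ_consistent[of a]
    by (simp add: numeral_eq_Suc valuation_fst_Circ)
qed (simp_all add: valuation_fst_And valuation_fst_Or valuation_fst_Imp valuation_fst_Neg
    valuation_fst_snd_Neg)

lemma derivable_L11_designated:
  assumes "derivable_L11 \<Gamma> a" and "\<forall>g \<in> \<Gamma>. fst (h g)"
  shows "fst (h a)"
  using assms
proof (induction rule: derivable_L11.induct)
  case (prem a \<Gamma>)
  then show ?case by blast
next
  case (ax a \<Gamma>)
  then show ?case by (simp add: axiom_L11_designated)
next
  case (MP \<Gamma> a b)
  then show ?case by (simp add: valuation_fst_Imp)
qed

end

theorem theorem7: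
  fixes \<Gamma> :: "fm set" and \<alpha> :: fm
  assumes "derivable_L11 \<Gamma> \<alpha>"
  shows "consequence_M11 \<Gamma> \<alpha>"
  using derivable_L11_designated[OF _ assms]
  by (auto simp: consequence_M11_def D10_def)

end
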